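(* Let $(a_n(q))$ be a $q$-Euler–Gauss sequence with $a_n(1)\neq0$ for all $n\ge1$. Then $(a_n(q))$ is a $q$-Gauss sequence.
   Context: $\mu$ is the Möbius function, $[n]_q=1+q+\dots+q^{n-1}$; polynomial congruences modulo $[n]_q$ mean divisibility of the difference by $[n]_q$ in $\mathbb{Z}[q]$. A sequence $(a_n(q))$ in $\mathbb{Z}[q]$ is a $q$-Euler–Gauss sequence if for all $n\ge1$, $\prod_{d\mid n,\,\mu(d)=1}a_{n/d}(q^d)\equiv\prod_{d\mid n,\,\mu(d)=-1}a_{n/d}(q^d)\pmod{[n]_q}$; it is a $q$-Gauss sequence if $\sum_{d\mid n}\mu(d)a_{n/d}(q^d)\equiv0\pmod{[n]_q}$ for all $n\ge1$. *)

theory Defs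
  imports "HOL-Computational_Algebra.Computational_Algebra"
begin

definition moebius_mu :: "nat \<Rightarrow> int" where
  "moebius_mu n = (if n = 0 then 0
     else if squarefree n then (-1) ^ card (prime_factors n) else 0)"

definition q_int :: "nat \<Rightarrow> int poly" where
  "q_int n = (\<Sum>i<n. monom 1 i)"

definition subst_qpow :: "int poly \<Rightarrow> nat \<Rightarrow> int poly" where
  "subst_qpow p d = pcompose p (monom 1 d)"

definition q_Euler_Gauss :: "(nat \<Rightarrow> int poly) \<Rightarrow> bool" where
  "q_Euler_Gauss a \<longleftrightarrow> (\<forall>n\<ge>1. q_int n dvd
      ((\<Prod>d\<in>{d. d dvd n \<and> moebius_mu d = 1}. subst_qpow (a (n div d)) d)
     - (\<Prod>d\<in>{d. d dvd n \<and> moebius_mu d = -1}. subst_qpow (a (n div d)) d)))"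

definition q_Gauss :: "(nat \<Rightarrow> int poly) \<Rightarrow> bool" where
  "q_Gauss a \<longleftrightarrow> (\<forall>n\<ge>1. q_int n dvd
      (\<Sum>d\<in>{d. d dvd n}. smult (moebius_mu d) (subst_qpow (a (n div d)) d)))"

end

theory Submission
  imports Defs
begin

text \<open>
  Evaluate at a complex root of unity z of order m dividing n. By strong induction on n the
  q-Euler-Gauss congruences force a_n(z) = a_{n/m}(1): at z the congruence modulo [n]_q becomes
  an equality of products over the squarefree divisors d of n, and by induction every factor
  a_{n/d}(z^d) with d > 1 equals a_{n/lcm(m,d)}(1), which is nonzero. For a prime p dividing m,
  multiplying or dividing d by p exchanges the divisors with mu(d) = 1 and mu(d) = -1 without
  changing lcm(m,d), so the two products agree except for the factors a_n(z) and a_{n/m}(1).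
  The same pairing shows that the Gauss sum, which at z equals the sum of mu(d) a_{n/lcm(m,d)}(1),
  vanishes for m > 1. Hence it vanishes at all roots of [n]_q, and since [n]_q is monic with
  n - 1 distinct complex roots, it divides the Gauss sum in Z[q].
\<close>

lemma map_poly_of_int_add [simp]:
  "map_poly of_int (p + q) = (map_poly of_int p + map_poly of_int q :: 'a::comm_ring_1 poly)"
  by (rule poly_eqI) (simp add: coeff_map_poly)

lemma map_poly_of_int_diff [simp]:
  "map_poly of_int (p - q) = (map_poly of_int p - map_poly of_int q :: 'a::comm_ring_1 poly)"
  by (rule poly_eqI) (simp add: coeff_map_poly)

lemma map_poly_of_int_mult [simp]:
  "map_poly of_int (p * q) = (map_poly of_int p * map_poly of_int q :: 'a::comm_ring_1 poly)"
  by (rule poly_eqI) (simp add: coeff_map_poly coeff_mult)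

lemma map_poly_of_int_smult [simp]:
  "map_poly of_int (smult c p) = (smult (of_int c) (map_poly of_int p) :: 'a::comm_ring_1 poly)"
  by (simp add: map_poly_smult)

lemma map_poly_of_int_sum [simp]:
  "map_poly of_int (sum f A) = (\<Sum>x\<in>A. map_poly of_int (f x) :: 'a::comm_ring_1 poly)"
  by (induction A rule: infinite_finite_induct) simp_all

lemma map_poly_of_int_prod [simp]:
  "map_poly of_int (prod f A) = (\<Prod>x\<in>A. map_poly of_int (f x) :: 'a::comm_ring_1 poly)"
  by (induction A rule: infinite_finite_induct) simp_all

lemma map_poly_of_int_pcompose [simp]:
  "map_poly of_int (pcompose p q) =
     (pcompose (map_poly of_int p) (map_poly of_int q) :: 'a::comm_ring_1 poly)"
  by (induction p) (simp_all add: pcompose_pCons map_poly_pCons of_int_poly)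

lemma poly_map_poly_of_int_of_int [simp]:
  "poly (map_poly of_int p :: 'a::comm_ring_1 poly) (of_int x) = of_int (poly p x)"
  by (induction p) (simp_all add: map_poly_pCons)

lemma poly_map_poly_of_int_subst_qpow [simp]:
  "poly (map_poly of_int (subst_qpow p d) :: 'a::comm_ring_1 poly) z =
     poly (map_poly of_int p) (z ^ d)"
  by (simp add: subst_qpow_def poly_pcompose map_poly_monom poly_monom)

lemma monic_dvd_if_common_roots:
  fixes T S :: "int poly" and A :: "'a::{idom, ring_char_0} set"
  assumes "lead_coeff T = 1" and "degree T \<le> card A"
    and "\<And>z. z \<in> A \<Longrightarrow> poly (map_poly of_int T) z = 0"
    and "\<And>z. z \<in> A \<Longrightarrow> poly (map_poly of_int S) z = 0"
  shows "T dvd S"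
proof -
  have "T \<noteq> 0" using assms(1) by auto
  obtain q r where qr: "pseudo_divmod S T = (q, r)" by fastforce
  have S: "S = T * q + r" using pseudo_divmod(1)[OF \<open>T \<noteq> 0\<close> qr] assms(1) by simp
  have deg_r: "r = 0 \<or> degree r < degree T" using pseudo_divmod(2)[OF \<open>T \<noteq> 0\<close> qr] .
  have "map_poly of_int r = (0 :: 'a poly)"
  proof (cases "r = 0")
    case False
    show ?thesis
    proof (rule poly_eqI_degree)
      fix z assume "z \<in> A"
      then show "poly (map_poly of_int r) z = poly 0 z"
        using assms(3,4) by (simp add: S algebra_simps)
    qed (use False deg_r assms(2) in \<open>simp_all add: degree_map_poly\<close>)
  qed simp
  then have "r = 0" by (subst (asm) map_poly_eq_0_iff) auto
  then show ?thesis using S by simp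
qed

lemma coeff_q_int: "coeff (q_int n) k = (if k < n then 1 else 0)"
  by (simp add: q_int_def coeff_sum coeff_monom)

lemma degree_q_int: "degree (q_int n) = n - 1"
proof (cases "n = 0")
  case False
  show ?thesis
  proof (rule antisym)
    show "degree (q_int n) \<le> n - 1" by (rule degree_le) (auto simp: coeff_q_int)
    show "n - 1 \<le> degree (q_int n)" using False by (intro le_degree) (simp add: coeff_q_int)
  qed
qed (simp add: q_int_def)

lemma lead_coeff_q_int: "n \<ge> 1 \<Longrightarrow> lead_coeff (q_int n) = 1"
  by (simp add: degree_q_int coeff_q_int)

lemma poly_q_int_root_of_unity:
  fixes z :: "'a::field"
  assumes "z ^ n = 1" and "z \<noteq> 1"
  shows "poly (map_poly of_int (q_int n)) z = 0"
  using assms by (simp add: q_int_def map_poly_monom poly_sum poly_monom geometric_sum)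

lemma q_int_dvdI:
  assumes "n \<ge> 1"
    and "\<And>z::complex. z ^ n = 1 \<Longrightarrow> z \<noteq> 1 \<Longrightarrow> poly (map_poly of_int S) z = 0"
  shows "q_int n dvd S"
proof (rule monic_dvd_if_common_roots)
  let ?A = "{z::complex. z ^ n = 1} - {1}"
  have "card ?A = n - 1"
    using assms(1) by (subst card_Diff_singleton) (auto simp: card_roots_unity_eq finite_roots_unity)
  then show "degree (q_int n) \<le> card ?A" by (simp add: degree_q_int)
qed (use assms in \<open>auto simp: lead_coeff_q_int poly_q_int_root_of_unity\<close>)

text \<open>Only meaningful for roots of unity: otherwise the LEAST ranges over an empty set.\<close>

definition mult_order :: "'a::monoid_mult \<Rightarrow> nat" where
  "mult_order z = (LEAST m. 0 < m \<and> z ^ m = 1)"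

lemma power_eq_one_iff_mult_order_dvd:
  fixes z :: "'a::monoid_mult"
  assumes "z ^ n = 1" and "n > 0"
  shows "z ^ j = 1 \<longleftrightarrow> mult_order z dvd j"
proof -
  let ?m = "mult_order z"
  have m: "0 < ?m \<and> z ^ ?m = 1"
    unfolding mult_order_def by (rule LeastI[of _ n]) (use assms in auto)
  have "z ^ j = z ^ (j mod ?m)"
  proof -
    have "z ^ j = z ^ (?m * (j div ?m) + j mod ?m)" by simp
    also have "\<dots> = (z ^ ?m) ^ (j div ?m) * z ^ (j mod ?m)" by (simp only: power_add power_mult)
    finally show ?thesis using m by simp
  qed
  moreover have "j mod ?m = 0" if "z ^ (j mod ?m) = 1"
  proof (rule ccontr)
    assume "j mod ?m \<noteq> 0"
    with that have "?m \<le> j mod ?m"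
      unfolding mult_order_def by (intro Least_le) simp
    moreover have "j mod ?m < ?m" using m by simp
    ultimately show False by linarith
  qed
  ultimately show ?thesis by (metis dvd_imp_mod_0 mod_0_imp_dvd power_0)
qed

lemma mult_order_dvd:
  fixes z :: "'a::monoid_mult"
  assumes "z ^ n = 1" and "n > 0"
  shows "mult_order z dvd n"
  using power_eq_one_iff_mult_order_dvd[OF assms, of n] assms(1) by simp

lemma mult_order_1 [simp]: "mult_order (1::'a::monoid_mult) = 1"
  unfolding mult_order_def by (rule Least_equality) auto

lemma mult_order_eq_1_iff:
  fixes z :: "'a::monoid_mult"
  assumes "z ^ n = 1" and "n > 0"
  shows "mult_order z = 1 \<longleftrightarrow> z = 1"
  using power_eq_one_iff_mult_order_dvd[OF assms, of 1] by simp

lemma mult_order_power: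
  fixes z :: "'a::monoid_mult"
  assumes "z ^ n = 1" and "n > 0" and "d > 0"
  shows "mult_order (z ^ d) = lcm (mult_order z) d div d"
proof -
  define e where "e = lcm (mult_order z) d div d"
  have lcm_eq: "lcm (mult_order z) d = d * e"
    unfolding e_def by simp
  have "(z ^ d) ^ n = (z ^ n) ^ d"
    by (simp only: power_mult[symmetric] mult.commute)
  then have root: "(z ^ d) ^ n = 1" using assms(1) by simp
  have "mult_order (z ^ d) dvd j \<longleftrightarrow> e dvd j" for j
  proof -
    have "mult_order (z ^ d) dvd j \<longleftrightarrow> z ^ (d * j) = 1"
      using power_eq_one_iff_mult_order_dvd[OF root assms(2)] by (simp add: power_mult)
    also have "\<dots> \<longleftrightarrow> lcm (mult_order z) d dvd d * j"
      using power_eq_one_iff_mult_order_dvd[OF assms(1,2)] by simp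
    also have "\<dots> \<longleftrightarrow> e dvd j"
      using assms(3) by (simp add: lcm_eq)
    finally show ?thesis .
  qed
  then show ?thesis
    unfolding e_def[symmetric] by (metis dvd_antisym dvd_refl)
qed

lemma div_div_mult_order_power:
  fixes z :: "'a::monoid_mult"
  assumes "z ^ n = 1" and "n > 0" and "d dvd n"
  shows "n div d div mult_order (z ^ d) = n div lcm (mult_order z) d"
proof -
  have "d > 0" using assms(2,3) by (auto intro: Nat.gr0I)
  with assms(1,2) have "mult_order (z ^ d) = lcm (mult_order z) d div d"
    by (rule mult_order_power)
  moreover have "d * (lcm (mult_order z) d div d) = lcm (mult_order z) d"
    by simp
  ultimately show ?thesis by (metis div_mult2_eq)
qed

lemma moebius_mu_cases: "moebius_mu d \<in> {0, 1, -1}"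
  unfolding moebius_mu_def by (auto simp: minus_one_power_iff)

lemma moebius_mu_Suc_0 [simp]: "moebius_mu (Suc 0) = 1"
  by (simp add: moebius_mu_def)

lemma moebius_mu_prime_mult:
  assumes "prime p" and "\<not> p dvd e"
  shows "moebius_mu (p * e) = - moebius_mu e"
proof -
  have "e \<noteq> 0" using assms(2) by (metis dvd_0_right)
  have "coprime p e" using assms by (simp add: prime_imp_coprime)
  then have "squarefree (p * e) \<longleftrightarrow> squarefree e"
    using squarefree_multD(2)[of p e] squarefree_mult_coprime squarefree_prime[OF assms(1)] by blast
  moreover have "prime_factors (p * e) = insert p (prime_factors e)"
    using assms(1) \<open>e \<noteq> 0\<close>
    by (auto simp: prime_factors_product prime_factorization_prime)
  moreover have "p \<notin> prime_factors e" using assms(2) by auto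
  ultimately show ?thesis
    using assms(1) \<open>e \<noteq> 0\<close> by (simp add: moebius_mu_def)
qed

definition toggle_factor :: "nat \<Rightarrow> nat \<Rightarrow> nat" where
  "toggle_factor p d = (if p dvd d then d div p else p * d)"

lemma toggle_factor_cases:
  assumes "prime p" and "squarefree d"
  obtains (coprime) "\<not> p dvd d" "toggle_factor p d = p * d"
    | (multiple) e where "d = p * e" "\<not> p dvd e" "toggle_factor p d = e"
proof (cases "p dvd d")
  case True
  then obtain e where d: "d = p * e" by blast
  have "\<not> p dvd e"
  proof
    assume "p dvd e"
    then have "p * p dvd d" using d by simp
    then show False using assms by (metis not_prime_unit power2_eq_square squarefree_def)
  qed
  moreover have "toggle_factor p d = e"
    using d assms(1) by (simp add: toggle_factor_def prime_gt_0_nat)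
  ultimately show ?thesis using d multiple by blast
qed (simp add: toggle_factor_def coprime)

lemma lcm_prime_mult:
  fixes p m e :: nat
  assumes "prime p" and "p dvd m" and "\<not> p dvd e"
  shows "lcm m (p * e) = lcm m e"
proof -
  have "coprime p e" using assms(1,3) by (simp add: prime_imp_coprime)
  then have "lcm p e = p * e" by (simp add: lcm_coprime)
  then have "lcm m (p * e) = lcm m (lcm p e)" by simp
  also have "\<dots> = lcm m e"
    using assms(2) by (metis lcm.assoc lcm_proj1_if_dvd_nat)
  finally show ?thesis .
qed

lemma toggle_factor_squarefree:
  assumes "prime p" and "squarefree d"
  shows "toggle_factor p (toggle_factor p d) = d"
    and "moebius_mu (toggle_factor p d) = - moebius_mu d"
    and "p dvd m \<Longrightarrow> lcm m (toggle_factor p d) = lcm m d"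
    and "p dvd n \<Longrightarrow> d dvd n \<Longrightarrow> toggle_factor p d dvd n"
proof -
  from assms have "toggle_factor p (toggle_factor p d) = d
      \<and> moebius_mu (toggle_factor p d) = - moebius_mu d
      \<and> (p dvd m \<longrightarrow> lcm m (toggle_factor p d) = lcm m d)
      \<and> (p dvd n \<and> d dvd n \<longrightarrow> toggle_factor p d dvd n)"
  proof (cases rule: toggle_factor_cases)
    case coprime
    then show ?thesis
      using assms moebius_mu_prime_mult[of p d] lcm_prime_mult[of p _ d]
      by (simp add: toggle_factor_def prime_gt_0_nat prime_imp_coprime divides_mult)
  next
    case (multiple e)
    then show ?thesis
      using assms moebius_mu_prime_mult[of p e] lcm_prime_mult[of p _ e]
      by (auto simp: toggle_factor_def prime_gt_0_nat intro: dvd_mult_right)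
  qed
  then show "toggle_factor p (toggle_factor p d) = d"
    and "moebius_mu (toggle_factor p d) = - moebius_mu d"
    and "p dvd m \<Longrightarrow> lcm m (toggle_factor p d) = lcm m d"
    and "p dvd n \<Longrightarrow> d dvd n \<Longrightarrow> toggle_factor p d dvd n"
    by blast+
qed

lemma squarefree_if_moebius_mu_nonzero: "moebius_mu d \<noteq> 0 \<Longrightarrow> squarefree d"
  by (auto simp: moebius_mu_def split: if_splits)

lemma bij_betw_toggle_factor:
  assumes "prime p" and "p dvd n"
  shows "bij_betw (toggle_factor p)
           {d. d dvd n \<and> moebius_mu d = 1} {d. d dvd n \<and> moebius_mu d = -1}"
  by (rule bij_betw_byWitness[where f' = "toggle_factor p"])
     (use assms in \<open>auto simp: toggle_factor_squarefree squarefree_if_moebius_mu_nonzero\<close>)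

lemma prod_moebius_pos_lcm_eq_neg:
  fixes G :: "nat \<Rightarrow> 'a::comm_monoid_mult"
  assumes "prime p" and "p dvd m" and "m dvd n"
  shows "(\<Prod>d | d dvd n \<and> moebius_mu d = 1. G (lcm m d))
       = (\<Prod>d | d dvd n \<and> moebius_mu d = -1. G (lcm m d))"
proof -
  have "p dvd n" using assms(2,3) by (rule dvd_trans)
  have "(\<Prod>d | d dvd n \<and> moebius_mu d = -1. G (lcm m d))
      = (\<Prod>d | d dvd n \<and> moebius_mu d = 1. G (lcm m (toggle_factor p d)))"
    using prod.reindex_bij_betw[OF bij_betw_toggle_factor[OF assms(1) \<open>p dvd n\<close>],
        of "\<lambda>d. G (lcm m d)"] by simp
  also have "\<dots> = (\<Prod>d | d dvd n \<and> moebius_mu d = 1. G (lcm m d))"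
    using assms(1,2)
    by (intro prod.cong) (auto simp: toggle_factor_squarefree squarefree_if_moebius_mu_nonzero)
  finally show ?thesis ..
qed

lemma sum_moebius_pos_lcm_eq_neg:
  fixes G :: "nat \<Rightarrow> 'a::comm_monoid_add"
  assumes "prime p" and "p dvd m" and "m dvd n"
  shows "(\<Sum>d | d dvd n \<and> moebius_mu d = 1. G (lcm m d))
       = (\<Sum>d | d dvd n \<and> moebius_mu d = -1. G (lcm m d))"
proof -
  have "p dvd n" using assms(2,3) by (rule dvd_trans)
  have "(\<Sum>d | d dvd n \<and> moebius_mu d = -1. G (lcm m d))
      = (\<Sum>d | d dvd n \<and> moebius_mu d = 1. G (lcm m (toggle_factor p d)))"
    using sum.reindex_bij_betw[OF bij_betw_toggle_factor[OF assms(1) \<open>p dvd n\<close>],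
        of "\<lambda>d. G (lcm m d)"] by simp
  also have "\<dots> = (\<Sum>d | d dvd n \<and> moebius_mu d = 1. G (lcm m d))"
    using assms(1,2)
    by (intro sum.cong) (auto simp: toggle_factor_squarefree squarefree_if_moebius_mu_nonzero)
  finally show ?thesis ..
qed

lemma sum_moebius_lcm_eq_0:
  fixes G :: "nat \<Rightarrow> 'a::comm_ring_1"
  assumes "m \<noteq> 1" and "m dvd n" and "n > 0"
  shows "(\<Sum>d | d dvd n. of_int (moebius_mu d) * G (lcm m d)) = 0"
proof -
  obtain p where p: "prime p" "p dvd m" using prime_factor_nat[OF assms(1)] by blast
  have "of_int (moebius_mu d) * G (lcm m d) =
      (if moebius_mu d = 1 then G (lcm m d) else 0) - (if moebius_mu d = -1 then G (lcm m d) else 0)"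
    for d using moebius_mu_cases[of d] by auto
  then have "(\<Sum>d | d dvd n. of_int (moebius_mu d) * G (lcm m d))
      = (\<Sum>d | d dvd n \<and> moebius_mu d = 1. G (lcm m d))
      - (\<Sum>d | d dvd n \<and> moebius_mu d = -1. G (lcm m d))"
    using assms(3) by (simp add: sum_subtractf sum.inter_filter[symmetric] conj_commute)
  also have "\<dots> = 0"
    using sum_moebius_pos_lcm_eq_neg[OF p assms(2)] by simp
  finally show ?thesis .
qed

lemma poly_power_root_of_unity_lcm:
  fixes a :: "nat \<Rightarrow> int poly" and z :: complex
  assumes "z ^ n = 1" and "n > 0" and "d dvd n"
    and "\<And>w::complex. w ^ (n div d) = 1 \<Longrightarrow>
           poly (map_poly of_int (a (n div d))) w = of_int (poly (a (n div d div mult_order w)) 1)"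
  shows "poly (map_poly of_int (a (n div d))) (z ^ d) =
           of_int (poly (a (n div lcm (mult_order z) d)) 1)"
proof -
  have "(z ^ d) ^ (n div d) = 1"
    using assms(1,3) by (simp add: power_mult[symmetric])
  then show ?thesis
    using assms(4) div_div_mult_order_power[OF assms(1-3)] by simp
qed

lemma q_Euler_Gauss_prod_eq_at_root_of_unity:
  fixes z :: complex
  assumes "q_Euler_Gauss a" and "n \<ge> 1" and "z ^ n = 1" and "z \<noteq> 1"
  shows "(\<Prod>d | d dvd n \<and> moebius_mu d = 1. poly (map_poly of_int (a (n div d))) (z ^ d))
       = (\<Prod>d | d dvd n \<and> moebius_mu d = -1. poly (map_poly of_int (a (n div d))) (z ^ d))"
proof -
  obtain Q where
    "(\<Prod>d | d dvd n \<and> moebius_mu d = 1. subst_qpow (a (n div d)) d)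
     - (\<Prod>d | d dvd n \<and> moebius_mu d = -1. subst_qpow (a (n div d)) d) = q_int n * Q"
    using assms(1,2) unfolding q_Euler_Gauss_def dvd_def by blast
  from arg_cong[OF this, of "\<lambda>p. poly (map_poly of_int p) z"] show ?thesis
    using poly_q_int_root_of_unity[OF assms(3,4)] by (simp add: poly_prod)
qed

lemma q_Euler_Gauss_poly_root_of_unity:
  fixes a :: "nat \<Rightarrow> int poly" and z :: complex
  assumes EG: "q_Euler_Gauss a" and nonzero: "\<And>n. n \<ge> 1 \<Longrightarrow> poly (a n) 1 \<noteq> 0"
    and "n \<ge> 1" and "z ^ n = 1"
  shows "poly (map_poly of_int (a n)) z = of_int (poly (a (n div mult_order z)) 1)"
  using assms(3,4)
proof (induction n arbitrary: z rule: less_induct)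
  case (less n)
  define m where "m = mult_order z"
  define E where "E d = poly (map_poly of_int (a (n div d))) (z ^ d)" for d
  define G where "G l = (of_int (poly (a (n div l)) 1) :: complex)" for l
  have "m dvd n" unfolding m_def using less.prems by (simp add: mult_order_dvd)
  have G_nonzero: "G (lcm m d) \<noteq> 0" if "d dvd n" for d
  proof -
    have "m \<noteq> 0" "d \<noteq> 0" using \<open>m dvd n\<close> that less.prems(1) by auto
    then have "0 < lcm m d" by (simp add: lcm_pos_nat)
    moreover have "lcm m d \<le> n"
      using \<open>m dvd n\<close> that less.prems(1) by (intro dvd_imp_le) simp_all
    ultimately have "n div lcm m d \<ge> 1" by (simp add: Suc_le_eq div_greater_zero_iff)
    then show ?thesis unfolding G_def using nonzero by simp
  qed
  have E_eq: "E d = G (lcm m d)" if "d dvd n" "d \<noteq> 1" for d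
  proof -
    have "d > 0" using that(1) less.prems(1) by (auto intro: Nat.gr0I)
    then have "n div d < n" "n div d \<ge> 1"
      using that less.prems(1) by (auto simp: Suc_le_eq div_greater_zero_iff intro: dvd_imp_le)
    then show ?thesis
      unfolding E_def G_def m_def using less.prems that(1)
      by (intro poly_power_root_of_unity_lcm less.IH) auto
  qed
  show ?case
  proof (cases "z = 1")
    case False
    then have "m \<noteq> 1" unfolding m_def using less.prems mult_order_eq_1_iff[of z n] by simp
    then obtain p where p: "prime p" "p dvd m" using prime_factor_nat by blast
    define Dpos where "Dpos = {d. d dvd n \<and> moebius_mu d = 1}"
    define Dneg where "Dneg = {d. d dvd n \<and> moebius_mu d = -1}"
    have "finite Dpos" using less.prems(1) by (simp add: Dpos_def)
    have "1 \<in> Dpos" by (simp add: Dpos_def)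
    have "(\<Prod>d\<in>Dpos - {1}. E d) = (\<Prod>d\<in>Dpos - {1}. G (lcm m d))"
      by (intro prod.cong refl E_eq) (auto simp: Dpos_def)
    then have "E 1 * (\<Prod>d\<in>Dpos - {1}. G (lcm m d)) = (\<Prod>d\<in>Dpos. E d)"
      using prod.remove[OF \<open>finite Dpos\<close> \<open>1 \<in> Dpos\<close>, of E] by simp
    also have "\<dots> = (\<Prod>d\<in>Dneg. E d)"
      unfolding Dpos_def Dneg_def E_def
      using q_Euler_Gauss_prod_eq_at_root_of_unity[OF EG less.prems False] .
    also have "\<dots> = (\<Prod>d\<in>Dneg. G (lcm m d))"
      by (intro prod.cong refl E_eq) (auto simp: Dneg_def)
    also have "\<dots> = (\<Prod>d\<in>Dpos. G (lcm m d))"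
      unfolding Dpos_def Dneg_def using prod_moebius_pos_lcm_eq_neg[OF p \<open>m dvd n\<close>] ..
    also have "\<dots> = G m * (\<Prod>d\<in>Dpos - {1}. G (lcm m d))"
      using prod.remove[OF \<open>finite Dpos\<close> \<open>1 \<in> Dpos\<close>, of "\<lambda>d. G (lcm m d)"] by simp
    finally have "E 1 = G m"
      using \<open>finite Dpos\<close> G_nonzero by (simp add: Dpos_def)
    then show ?thesis by (simp add: E_def G_def m_def)
  qed (use poly_map_poly_of_int_of_int[of "a n" 1] in simp)
qed

corollary q_Euler_Gauss_poly_power_root_of_unity:
  fixes a :: "nat \<Rightarrow> int poly" and z :: complex
  assumes "q_Euler_Gauss a" and "\<And>n. n \<ge> 1 \<Longrightarrow> poly (a n) 1 \<noteq> 0"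
    and "n \<ge> 1" and "z ^ n = 1" and "d dvd n"
  shows "poly (map_poly of_int (a (n div d))) (z ^ d) =
           of_int (poly (a (n div lcm (mult_order z) d)) 1)"
proof (rule poly_power_root_of_unity_lcm)
  fix w :: complex
  assume "w ^ (n div d) = 1"
  moreover have "n div d \<ge> 1"
    using assms(3,5) by (auto simp: Suc_le_eq div_greater_zero_iff intro: dvd_imp_le Nat.gr0I)
  ultimately show "poly (map_poly of_int (a (n div d))) w =
                     of_int (poly (a (n div d div mult_order w)) 1)"
    using q_Euler_Gauss_poly_root_of_unity[OF assms(1,2)] by blast
qed (use assms in auto)

theorem theorem6:
  fixes a :: "nat \<Rightarrow> int poly"
  assumes "q_Euler_Gauss a"
    and "\<And>n. n \<ge> 1 \<Longrightarrow> poly (a n) 1 \<noteq> 0"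
  shows "q_Gauss a"
  unfolding q_Gauss_def
proof (intro allI impI)
  fix n :: nat
  assume "n \<ge> 1"
  then show "q_int n dvd (\<Sum>d | d dvd n. smult (moebius_mu d) (subst_qpow (a (n div d)) d))"
    (is "_ dvd ?S")
  proof (rule q_int_dvdI)
    fix z :: complex
    assume "z ^ n = 1" and "z \<noteq> 1"
    let ?m = "mult_order z"
    have "poly (map_poly of_int ?S) z
        = (\<Sum>d | d dvd n. of_int (moebius_mu d) * poly (map_poly of_int (a (n div d))) (z ^ d))"
      by (simp add: poly_sum)
    also have "\<dots> = (\<Sum>d | d dvd n. of_int (moebius_mu d) * of_int (poly (a (n div lcm ?m d)) 1))"
      using q_Euler_Gauss_poly_power_root_of_unity[OF assms \<open>n \<ge> 1\<close> \<open>z ^ n = 1\<close>]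
      by (intro sum.cong) simp_all
    also have "\<dots> = 0"
      using \<open>n \<ge> 1\<close> \<open>z ^ n = 1\<close> \<open>z \<noteq> 1\<close> mult_order_eq_1_iff[of z n] mult_order_dvd[of z n]
      by (intro sum_moebius_lcm_eq_0) auto
    finally show "poly (map_poly of_int ?S) z = 0" .
  qed
qed

end
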